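(* Let $r$ be a prime divisor of $n$ and let $S\subseteq\mathbb{Z}_n$. Assume there is $m\mid n$ with $\gcd(m,r)=1$ such that $\Phi_{mr}\mid m_S$ but $\Phi_m\nmid m_S$. Then $|S|\ge r$. Moreover, every coset of the subgroup of $\mathbb{Z}_n$ of order $n/r$ contains at least one point of $S$.
   Context: $\Phi_d$ denotes the $d$-th cyclotomic polynomial; $m_S(x)=\sum_{s\in S}x^s$ is the mask polynomial of $S$, where elements of $\mathbb{Z}_n$ are identified with $\{0,\dots,n-1\}$ and the polynomial is considered modulo $x^n-1$. *)

theory Defs
  imports "HOL-Analysis.Analysis" "HOL-Computational_Algebra.Polynomial"
begin

text \<open>The d-th cyclotomic polynomial, as a complex polynomial: the product of
  (x - zeta) over the primitive d-th roots of unity zeta = exp(2 pi i k/d),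
  0 <= k < d, gcd(k,d) = 1.  (It has integer coefficients; divisibility by this
  monic polynomial is the same over Z, Q and C.)\<close>
definition cyclotomic :: "nat \<Rightarrow> complex poly" where
  "cyclotomic d = (\<Prod>k \<in> {k. k < d \<and> coprime k d}. [:- cis (2 * pi * real k / real d), 1:])"

text \<open>Mask polynomial of a set S of residues, elements of Z_n identified with
  {0,...,n-1}.\<close>
definition mask_poly :: "nat set \<Rightarrow> complex poly" where
  "mask_poly S = (\<Sum>s\<in>S. monom 1 s)"

definition dvd_mod_xn :: "nat \<Rightarrow> complex poly \<Rightarrow> complex poly \<Rightarrow> bool" where
  "dvd_mod_xn n p q \<longleftrightarrow> (\<exists>h. p dvd q + h * (monom 1 n - 1))"

end

theory Submission
  imports Defs
begin

text \<open>Write e(x) = exp(2 pi i x). Reducing modulo x^n - 1 does not change values at n-th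
  roots of unity, so m_S vanishes at every primitive mr-th root of unity, while
  m_S(e(k/m)) is nonzero for some k coprime to m. The points e(k/m + b/r), 0 < b < r, are
  primitive mr-th roots, hence zeros of m_S. Averaging m_S(e(k/m + b/r)) e(-bj/r) over all
  b < r isolates a residue class of S: the average is the sum of e(ks/m) over the s in S
  congruent to j mod r, and it equals m_S(e(k/m))/r, which is nonzero. So S meets every
  residue class mod r, and in particular has at least r elements.\<close>

definition e2pi :: "real \<Rightarrow> complex" where
  "e2pi x = cis (2 * pi * x)"

lemma e2pi_add: "e2pi (x + y) = e2pi x * e2pi y"
  by (simp add: e2pi_def cis_mult distrib_left)

lemma e2pi_of_int [simp]: "e2pi (of_int k) = 1"
  by (simp add: e2pi_def)

lemma e2pi_zero [simp]: "e2pi 0 = 1"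
  by (simp add: e2pi_def)

lemma e2pi_of_nat [simp]: "e2pi (of_nat k) = 1"
  using e2pi_of_int[of "int k"] by simp

lemma e2pi_power: "e2pi x ^ n = e2pi (real n * x)"
  unfolding e2pi_def Complex.DeMoivre by (simp add: ac_simps)

lemma e2pi_eq_1_iff: "e2pi x = 1 \<longleftrightarrow> x \<in> \<int>"
proof
  assume "e2pi x = 1"
  then obtain k :: int where "2 * pi * x = of_int (2 * k) * pi"
    by (auto simp: e2pi_def cis_conv_exp exp_eq_1)
  then have "x = of_int k" by simp
  then show "x \<in> \<int>" by simp
qed (auto elim!: Ints_cases)

lemma e2pi_frac_eq_1_iff:
  assumes "d > 0"
  shows "e2pi (of_int t / real d) = 1 \<longleftrightarrow> int d dvd t"
proof -
  have "of_int t / real d \<in> \<int> \<longleftrightarrow> int d dvd t"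
  proof
    assume "of_int t / real d \<in> \<int>"
    then obtain q where "of_int t / real d = of_int q" by (auto elim!: Ints_cases)
    then have "of_int t = (of_int (q * int d) :: real)" using assms by (simp add: field_simps)
    then have "t = q * int d" by linarith
    then show "int d dvd t" by simp
  qed (use assms in auto)
  then show ?thesis by (simp add: e2pi_eq_1_iff)
qed

lemma e2pi_frac_mod:
  assumes "d > 0"
  shows "e2pi (real k / real d) = e2pi (real (k mod d) / real d)"
proof -
  have "real k / real d = real (k div d) + real (k mod d) / real d"
    using assms by (simp add: field_simps flip: of_nat_mult of_nat_add)
  then show ?thesis by (simp add: e2pi_add)
qed

lemma e2pi_frac_power_eq_1:
  assumes "d dvd n" "d > 0"
  shows "e2pi (real k / real d) ^ n = 1"
proof -
  obtain c where "n = d * c" using assms(1) ..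
  then have "real n * (real k / real d) = real (c * k)" using assms(2) by simp
  then show ?thesis by (simp only: e2pi_power e2pi_of_nat)
qed

lemma sum_e2pi_frac:
  assumes "d > 0"
  shows "(\<Sum>b<d. e2pi (real b * of_int t / real d)) = (if int d dvd t then of_nat d else 0)"
proof -
  define w where "w = e2pi (of_int t / real d)"
  have powers: "e2pi (real b * of_int t / real d) = w ^ b" for b
    by (simp add: w_def e2pi_power)
  have "w ^ d = 1"
    using assms by (simp add: w_def e2pi_power)
  moreover have "w = 1 \<longleftrightarrow> int d dvd t"
    unfolding w_def by (rule e2pi_frac_eq_1_iff[OF assms])
  ultimately show ?thesis
    by (auto simp: powers geometric_sum)
qed

lemma prod_linear_factors_dvd:
  fixes p :: "'a::idom poly"
  assumes "finite A" "inj_on f A" "\<And>a. a \<in> A \<Longrightarrow> poly p (f a) = 0"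
  shows "(\<Prod>a\<in>A. [:- f a, 1:]) dvd p"
  using assms
proof (induction A arbitrary: p rule: finite_induct)
  case empty
  then show ?case by simp
next
  case (insert x A)
  have "[:- f x, 1:] dvd p"
    using insert.prems by (simp flip: poly_eq_0_iff_dvd)
  then obtain q where q: "p = [:- f x, 1:] * q" ..
  have "poly q (f a) = 0" if "a \<in> A" for a
  proof -
    have "f a \<noteq> f x" using insert.prems(1) insert.hyps(2) that by (auto simp: inj_on_def)
    then show ?thesis using insert.prems(2)[of a] that q by simp
  qed
  then have "(\<Prod>a\<in>A. [:- f a, 1:]) dvd q"
    using insert.IH insert.prems(1) by (simp add: inj_on_insert)
  then show ?case
    unfolding q prod.insert[OF insert.hyps] by (rule mult_dvd_mono[OF dvd_refl])
qed

lemma cyclotomic_conv_e2pi: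
  "cyclotomic d = (\<Prod>k\<in>{k. k < d \<and> coprime k d}. [:- e2pi (real k / real d), 1:])"
  by (simp add: cyclotomic_def e2pi_def)

lemma poly_cyclotomic_primitive_root:
  assumes "d > 0" "coprime k d"
  shows "poly (cyclotomic d) (e2pi (real k / real d)) = 0"
proof -
  have "k mod d \<in> {k. k < d \<and> coprime k d}"
    using assms by (simp add: coprime_mod_left_iff)
  then have "poly (cyclotomic d) (e2pi (real (k mod d) / real d)) = 0"
    by (auto simp: cyclotomic_conv_e2pi poly_prod intro!: prod_zero)
  then show ?thesis
    by (simp only: e2pi_frac_mod[OF assms(1), of k])
qed

lemma cyclotomic_dvdI:
  assumes "d > 0" "\<And>k. k < d \<Longrightarrow> coprime k d \<Longrightarrow> poly q (e2pi (real k / real d)) = 0"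
  shows "cyclotomic d dvd q"
proof -
  have "inj_on (\<lambda>k. e2pi (real k / real d)) {..<d}"
    using bij_betw_imp_inj_on[OF Complex.bij_betw_roots_unity[OF assms(1)]] by (simp add: e2pi_def)
  then have "inj_on (\<lambda>k. e2pi (real k / real d)) {k. k < d \<and> coprime k d}"
    by (rule inj_on_subset) auto
  then show ?thesis
    unfolding cyclotomic_conv_e2pi using assms(2) by (intro prod_linear_factors_dvd) auto
qed

lemma dvd_mod_xn_poly_eq_0:
  assumes "dvd_mod_xn n p q" "z ^ n = 1" "poly p z = 0"
  shows "poly q z = 0"
proof -
  obtain h where "p dvd q + h * (monom 1 n - 1)"
    using assms(1) by (auto simp: dvd_mod_xn_def)
  then have "poly (q + h * (monom 1 n - 1)) z = 0"
    using assms(3) by (metis dvdE mult_zero_left poly_mult)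
  then show ?thesis using assms(2) by (simp add: poly_monom)
qed

lemma dvd_mod_xn_cyclotomic_primitive_root:
  assumes "dvd_mod_xn n (cyclotomic d) q" "d dvd n" "d > 0" "coprime k d"
  shows "poly q (e2pi (real k / real d)) = 0"
  using assms by (intro dvd_mod_xn_poly_eq_0[OF assms(1)] e2pi_frac_power_eq_1 poly_cyclotomic_primitive_root)

lemma not_dvd_mod_xn_cyclotomic:
  assumes "\<not> dvd_mod_xn n (cyclotomic d) q" "d > 0"
  obtains k where "coprime k d" "poly q (e2pi (real k / real d)) \<noteq> 0"
proof -
  have "\<not> cyclotomic d dvd q"
    using assms(1) unfolding dvd_mod_xn_def by (metis add.right_neutral mult_zero_left)
  then show ?thesis
    using cyclotomic_dvdI[OF assms(2)] that by blast
qed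

lemma coprime_mult_add_mult:
  fixes k b m r :: nat
  assumes "coprime k m" "coprime b r" "coprime m r"
  shows "coprime (k * r + b * m) (m * r)"
proof -
  have "coprime (k * r) m"
    using assms by (simp add: coprime_commute)
  moreover have "gcd (k * r + b * m) m = gcd (k * r) m"
    by (metis gcd_add_mult gcd.commute add.commute)
  ultimately have "coprime (k * r + b * m) m"
    by (simp add: coprime_iff_gcd_eq_1)
  have "coprime (b * m) r"
    using assms by (simp add: coprime_commute)
  moreover have "gcd (k * r + b * m) r = gcd (b * m) r"
    by (metis gcd_add_mult gcd.commute)
  ultimately have "coprime (k * r + b * m) r"
    by (simp add: coprime_iff_gcd_eq_1)
  then show ?thesis
    using \<open>coprime (k * r + b * m) m\<close> by simp
qed

lemma e2pi_frac_mult: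
  assumes "m > 0" "r > 0"
  shows "e2pi (real k / real m) * e2pi (real b / real r) = e2pi (real (k * r + b * m) / real (m * r))"
  using assms by (simp add: e2pi_add[symmetric] field_simps)

lemma poly_mask_poly: "poly (mask_poly S) z = (\<Sum>s\<in>S. z ^ s)"
  by (simp add: mask_poly_def poly_sum poly_monom)

lemma mask_poly_residue_filter:
  assumes "finite S" "r > 0"
  shows "(\<Sum>b<r. e2pi (- (real b * real j / real r)) * poly (mask_poly S) (z * e2pi (real b / real r)))
    = of_nat r * poly (mask_poly {s\<in>S. s mod r = j mod r}) z"
proof -
  have twist: "e2pi (- (real b * real j / real r)) * e2pi (real b / real r) ^ s
      = e2pi (real b * of_int (int s - int j) / real r)" for b s
    by (simp add: e2pi_power e2pi_add[symmetric] algebra_simps diff_divide_distrib)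
  have orthogonality: "(\<Sum>b<r. e2pi (real b * of_int (int s - int j) / real r))
      = (if s mod r = j mod r then of_nat r else 0)" for s
  proof -
    have "int r dvd int s - int j \<longleftrightarrow> s mod r = j mod r"
      by (simp add: mod_eq_dvd_iff[symmetric] flip: of_nat_mod)
    then show ?thesis by (simp only: sum_e2pi_frac[OF assms(2)])
  qed
  have "(\<Sum>b<r. e2pi (- (real b * real j / real r)) * poly (mask_poly S) (z * e2pi (real b / real r)))
      = (\<Sum>b<r. \<Sum>s\<in>S. z ^ s * e2pi (real b * of_int (int s - int j) / real r))"
    by (simp add: poly_mask_poly power_mult_distrib sum_distrib_left mult.left_commute twist)
  also have "\<dots> = (\<Sum>s\<in>S. z ^ s * (\<Sum>b<r. e2pi (real b * of_int (int s - int j) / real r)))"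
    by (subst sum.swap) (simp add: sum_distrib_left)
  also have "\<dots> = (\<Sum>s\<in>S. if s mod r = j mod r then of_nat r * z ^ s else 0)"
    unfolding orthogonality by (intro sum.cong) auto
  also have "\<dots> = of_nat r * poly (mask_poly {s\<in>S. s mod r = j mod r}) z"
    by (simp add: sum.inter_filter[OF assms(1), symmetric] poly_mask_poly sum_distrib_left)
  finally show ?thesis .
qed

lemma mask_poly_meets_residue_class:
  assumes "finite S" "r > 0" "poly (mask_poly S) z \<noteq> 0"
    and "\<And>b. 0 < b \<Longrightarrow> b < r \<Longrightarrow> poly (mask_poly S) (z * e2pi (real b / real r)) = 0"
  shows "\<exists>s\<in>S. s mod r = j mod r"
proof -
  define F where "F b = e2pi (- (real b * real j / real r)) * poly (mask_poly S) (z * e2pi (real b / real r))"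
    for b
  have "(\<Sum>b<r. F b) = F 0 + (\<Sum>b<r - 1. F (Suc b))"
    using sum.lessThan_Suc_shift[of F "r - 1"] assms(2) by simp
  also have "(\<Sum>b<r - 1. F (Suc b)) = 0"
  proof (intro sum.neutral ballI)
    fix b assume "b \<in> {..<r - 1}"
    then show "F (Suc b) = 0"
      using assms(4)[of "Suc b"] by (simp add: F_def del: of_nat_Suc)
  qed
  finally have "of_nat r * poly (mask_poly {s\<in>S. s mod r = j mod r}) z = poly (mask_poly S) z"
    by (simp add: F_def mask_poly_residue_filter[OF assms(1,2)])
  then have "poly (mask_poly {s\<in>S. s mod r = j mod r}) z \<noteq> 0"
    using assms(3) by auto
  then have "{s\<in>S. s mod r = j mod r} \<noteq> {}"
    by (metis mask_poly_def poly_0 sum.empty)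
  then show ?thesis by blast
qed

theorem lemma3p3:
  fixes n r m :: nat and S :: "nat set"
  assumes "0 < n" and "prime r" and "r dvd n"
    and "S \<subseteq> {0..<n}"
    and "m dvd n" and "coprime m r"
    and "dvd_mod_xn n (cyclotomic (m * r)) (mask_poly S)"
    and "\<not> dvd_mod_xn n (cyclotomic m) (mask_poly S)"
  shows "card S \<ge> r \<and> (\<forall>a. \<exists>s\<in>S. s mod r = a mod r)"
proof -
  have "m > 0" "r > 0" "finite S"
    using assms(1,2,4,5) prime_gt_0_nat finite_subset by (auto intro!: Nat.gr0I)
  have "m * r dvd n"
    using assms(3,5,6) by (simp add: divides_mult)
  obtain k where k: "coprime k m" "poly (mask_poly S) (e2pi (real k / real m)) \<noteq> 0"
    using not_dvd_mod_xn_cyclotomic[OF assms(8) \<open>m > 0\<close>] .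
  have "poly (mask_poly S) (e2pi (real k / real m) * e2pi (real b / real r)) = 0"
    if "0 < b" "b < r" for b
  proof -
    have "coprime b r"
      using assms(2) that by (metis prime_imp_coprime coprime_commute nat_dvd_not_less)
    then have "coprime (k * r + b * m) (m * r)"
      using assms(6) k(1) by (rule coprime_mult_add_mult[rotated])
    then have "poly (mask_poly S) (e2pi (real (k * r + b * m) / real (m * r))) = 0"
      using \<open>m > 0\<close> \<open>r > 0\<close>
      by (intro dvd_mod_xn_cyclotomic_primitive_root[OF assms(7) \<open>m * r dvd n\<close>]) simp_all
    then show ?thesis
      by (simp only: e2pi_frac_mult[OF \<open>m > 0\<close> \<open>r > 0\<close>])
  qed
  then have cover: "\<forall>a. \<exists>s\<in>S. s mod r = a mod r"
    using mask_poly_meets_residue_class[OF \<open>finite S\<close> \<open>r > 0\<close> k(2)] by blast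
  then have "{..<r} \<subseteq> (\<lambda>s. s mod r) ` S"
    by (metis image_eqI lessThan_iff mod_less subsetI)
  then have "r \<le> card S"
    using surj_card_le[OF \<open>finite S\<close>] by fastforce
  with cover show ?thesis by simp
qed

end
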